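(* For any valid scheme (satisfying (C1)–(C8)), any database $n$, any message indices $k\ne k'$, and any $\mathcal{R}_U$, letting $\mathcal{R}_U'$ be the user-side common randomness provided by the user privacy constraint (C6) for $(k,k',n,\mathcal{R}_U)$, \[ H\big(A_n^{[k',\mathcal{R}_U']}\mid Q_n^{[k',\mathcal{R}_U']},\mathcal{R}_U'\big)= H\big(A_n^{[k',\mathcal{R}_U']}\mid Q_n^{[k',\mathcal{R}_U']},W_k,\mathcal{R}_U'\big). \]
   Context: Model (SPIR with user-side common randomness). There are $N\ge1$ non-colluding databases, each storing the same $K\ge2$ messages $W_1,\dots,W_K$. Each message consists of $L$ i.i.d. symbols uniform over a sufficiently large finite field $\mathbb{F}_q$; entropies are in $q$-ary units, so $H(W_k)=L$ and $H(W_{1:K})=KL$. The databases share server-side common randomness $\mathcal{R}_S$, unknown to the user. The user holds user-side common randomness $\mathcal{R}_U$, a subset of the components of $\mathcal{R}_S$, unknown to the databases except for its size (uniform over subsets of given cardinality). $\mathcal{F}$ is the user's retrieval-strategy randomness. To retrieve $W_k$ the user sends $Q_n^{[k,\mathcal{R}_U]}$ to database $n$, receiving $A_n^{[k,\mathcal{R}_U]}$; $W_{\bar k}=\{W_j:j\ne k\}$. A valid scheme satisfies for all $k,n,\mathcal{R}_U$: (C1) $I(W_{1:K};k,\mathcal{F},\mathcal{R}_S,\mathcal{R}_U)=0$; (C2) $I(Q_{1:N}^{[k,\mathcal{R}_U]};W_{1:K},\mathcal{R}_S\setminus\mathcal{R}_U)=0$; (C3) $H(Q_{1:N}^{[k,\mathcal{R}_U]}\mid\mathcal{F})=0$;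 (C4) $H(A_n^{[k,\mathcal{R}_U]}\mid Q_n^{[k,\mathcal{R}_U]},W_{1:K},\mathcal{R}_S)=0$; (C5) $H(W_k\mid\mathcal{F},A_{1:N}^{[k,\mathcal{R}_U]},\mathcal{R}_U)=0$; (C6) user privacy: for all $k,k',n,\mathcal{R}_U$ there is $\mathcal{R}_U'$ with $H(\mathcal{R}_U')=H(\mathcal{R}_U)$ and $(Q_n^{[k,\mathcal{R}_U]},A_n^{[k,\mathcal{R}_U]},W_{1:K},\mathcal{R}_S)\sim(Q_n^{[k',\mathcal{R}_U']},A_n^{[k',\mathcal{R}_U']},W_{1:K},\mathcal{R}_S)$; (C7) $I(W_{\bar k};\mathcal{F},A_{1:N}^{[k,\mathcal{R}_U]},\mathcal{R}_U)=0$; (C8) $I(\mathcal{R}_S\setminus\mathcal{R}_U;\mathcal{F},A_{1:N}^{[k,\mathcal{R}_U]},W_k,\mathcal{R}_U)=0$. *)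

theory Defs
  imports "HOL-Probability.Probability"
begin

abbreviation ent :: "real \<Rightarrow> 'w pmf \<Rightarrow> ('w \<Rightarrow> 'x) \<Rightarrow> real" where
  "ent b p X \<equiv> prob_space.entropy (measure_pmf p) b
      (count_space (X ` space (measure_pmf p))) X"

abbreviation cent :: "real \<Rightarrow> 'w pmf \<Rightarrow> ('w \<Rightarrow> 'x) \<Rightarrow> ('w \<Rightarrow> 'y) \<Rightarrow> real" where
  "cent b p X Y \<equiv> prob_space.conditional_entropy (measure_pmf p) b
      (count_space (X ` space (measure_pmf p))) (count_space (Y ` space (measure_pmf p))) X Y"

abbreviation minf :: "real \<Rightarrow> 'w pmf \<Rightarrow> ('w \<Rightarrow> 'x) \<Rightarrow> ('w \<Rightarrow> 'y) \<Rightarrow> real" where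
  "minf b p X Y \<equiv> prob_space.mutual_information (measure_pmf p) b
      (count_space (X ` space (measure_pmf p))) (count_space (Y ` space (measure_pmf p))) X Y"

definition Wall :: "nat \<Rightarrow> (nat \<Rightarrow> 'w \<Rightarrow> 'm) \<Rightarrow> 'w \<Rightarrow> (nat \<Rightarrow> 'm)" where
  "Wall K W = (\<lambda>\<omega>. restrict (\<lambda>j. W j \<omega>) {1..K})"

definition Wbar :: "nat \<Rightarrow> (nat \<Rightarrow> 'w \<Rightarrow> 'm) \<Rightarrow> nat \<Rightarrow> 'w \<Rightarrow> (nat \<Rightarrow> 'm)" where
  "Wbar K W k = (\<lambda>\<omega>. restrict (\<lambda>j. W j \<omega>) ({1..K} - {k}))"

text \<open>Sub-collection of the components of the server-side randomness indexed by a set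
  of component indices: R_S is comps C Rs, R_U is comps U Rs, R_S minus R_U is
  comps (C - U) Rs.\<close>
definition comps :: "'c set \<Rightarrow> ('c \<Rightarrow> 'w \<Rightarrow> 'r) \<Rightarrow> 'w \<Rightarrow> ('c \<Rightarrow> 'r)" where
  "comps U Rs = (\<lambda>\<omega>. restrict (\<lambda>c. Rs c \<omega>) U)"

text \<open>Q_{1:N} resp. A_{1:N} for desired index k and user randomness subset U.\<close>
definition allDB :: "nat \<Rightarrow> (nat \<Rightarrow> 'c set \<Rightarrow> nat \<Rightarrow> 'w \<Rightarrow> 'x) \<Rightarrow> nat \<Rightarrow> 'c set
    \<Rightarrow> 'w \<Rightarrow> (nat \<Rightarrow> 'x)" where
  "allDB N X k U = (\<lambda>\<omega>. restrict (\<lambda>n. X k U n \<omega>) {1..N})"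

definition admissible :: "'c set \<Rightarrow> nat \<Rightarrow> 'c set \<Rightarrow> bool" where
  "admissible C m U \<longleftrightarrow> U \<subseteq> C \<and> card U = m"

text \<open>The model: N databases, K messages of L i.i.d. uniform symbols over the finite
  field 'f (so the entropy base is q = CARD('f)), server randomness components Rs c
  for c in C, user strategy randomness F, queries Q k U n and answers A k U n.\<close>
definition spir_model :: "'w::finite pmf \<Rightarrow> nat \<Rightarrow> nat \<Rightarrow> nat \<Rightarrow> 'c set \<Rightarrow> nat
    \<Rightarrow> (nat \<Rightarrow> 'w \<Rightarrow> 'f::{finite,field} list) \<Rightarrow> bool" where
  "spir_model p N K L C m W \<longleftrightarrow>
     N \<ge> 1 \<and> K \<ge> 2 \<and> finite C \<and> m \<le> card C \<and>
     map_pmf (Wall K W) p = pmf_of_set (PiE {1..K} (\<lambda>_. {xs :: 'f list. length xs = L}))"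

definition valid_scheme :: "'w::finite pmf \<Rightarrow> nat \<Rightarrow> nat \<Rightarrow> nat \<Rightarrow> 'c set \<Rightarrow> nat
    \<Rightarrow> (nat \<Rightarrow> 'w \<Rightarrow> 'f::{finite,field} list) \<Rightarrow> ('c \<Rightarrow> 'w \<Rightarrow> 'r) \<Rightarrow> ('w \<Rightarrow> 'g)
    \<Rightarrow> (nat \<Rightarrow> 'c set \<Rightarrow> nat \<Rightarrow> 'w \<Rightarrow> 'q) \<Rightarrow> (nat \<Rightarrow> 'c set \<Rightarrow> nat \<Rightarrow> 'w \<Rightarrow> 'a) \<Rightarrow> bool" where
  "valid_scheme p N K L C m W Rs F Q A \<longleftrightarrow>
   (let b = real CARD('f) in
     spir_model p N K L C m W \<and>
     (\<forall>k\<in>{1..K}. \<forall>U. admissible C m U \<longrightarrow>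
        \<comment> \<open>(C1)\<close>
        minf b p (Wall K W) (\<lambda>\<omega>. (k, F \<omega>, comps C Rs \<omega>, comps U Rs \<omega>)) = 0 \<and>
        \<comment> \<open>(C2)\<close>
        minf b p (allDB N Q k U) (\<lambda>\<omega>. (Wall K W \<omega>, comps (C - U) Rs \<omega>)) = 0 \<and>
        \<comment> \<open>(C3)\<close>
        cent b p (allDB N Q k U) F = 0 \<and>
        \<comment> \<open>(C4)\<close>
        (\<forall>n\<in>{1..N}. cent b p (A k U n) (\<lambda>\<omega>. (Q k U n \<omega>, Wall K W \<omega>, comps C Rs \<omega>)) = 0) \<and>
        \<comment> \<open>(C5)\<close>
        cent b p (W k) (\<lambda>\<omega>. (F \<omega>, allDB N A k U \<omega>, comps U Rs \<omega>)) = 0 \<and>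
        \<comment> \<open>(C7)\<close>
        minf b p (Wbar K W k) (\<lambda>\<omega>. (F \<omega>, allDB N A k U \<omega>, comps U Rs \<omega>)) = 0 \<and>
        \<comment> \<open>(C8)\<close>
        minf b p (comps (C - U) Rs) (\<lambda>\<omega>. (F \<omega>, allDB N A k U \<omega>, W k \<omega>, comps U Rs \<omega>)) = 0) \<and>
     \<comment> \<open>(C6) user privacy\<close>
     (\<forall>k\<in>{1..K}. \<forall>k'\<in>{1..K}. \<forall>n\<in>{1..N}. \<forall>U. admissible C m U \<longrightarrow>
        (\<exists>U'. admissible C m U' \<and> ent b p (comps U' Rs) = ent b p (comps U Rs) \<and>
           map_pmf (\<lambda>\<omega>. (Q k U n \<omega>, A k U n \<omega>, Wall K W \<omega>, comps C Rs \<omega>)) p =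
           map_pmf (\<lambda>\<omega>. (Q k' U' n \<omega>, A k' U' n \<omega>, Wall K W \<omega>, comps C Rs \<omega>)) p)))"

end

theory Submission
  imports Defs
begin

(* Only (C3) and (C7) for the pair (k', U') are needed.
   By (C3) the queries Q_{1:N} add no information to F, so (C7) makes the messages other than
   W_k' independent of (Q_{1:N}, F, A_{1:N}, R_U').  Since k \<noteq> k', W_k is among them, and
   (A_n, Q_n, R_U') is a function of that tuple; hence I(A_n; W_k | Q_n, R_U') = 0. *)

definition determines :: "('w \<Rightarrow> 'y) \<Rightarrow> ('w \<Rightarrow> 'x) \<Rightarrow> bool" where
  "determines Y X \<longleftrightarrow> (\<forall>\<omega> \<omega>'. Y \<omega> = Y \<omega>' \<longrightarrow> X \<omega> = X \<omega>')"

lemma determines_iff_factors: "determines Y X \<longleftrightarrow> (\<exists>f. X = f \<circ> Y)"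
proof
  assume "determines Y X"
  then have "X = (\<lambda>y. X (SOME \<omega>. Y \<omega> = y)) \<circ> Y"
    unfolding determines_def comp_def by (metis (mono_tags) someI)
  then show "\<exists>f. X = f \<circ> Y" by blast
qed (auto simp: determines_def)

lemma sum_image_pmf_map:
  fixes p :: "'w::finite pmf"
  shows "(\<Sum>v\<in>range V. pmf (map_pmf V p) v * f v) = (\<Sum>\<omega>\<in>UNIV. pmf p \<omega> * f (V \<omega>))"
proof -
  have "(\<Sum>\<omega>\<in>UNIV. pmf p \<omega> * f (V \<omega>)) = (\<Sum>v\<in>range V. \<Sum>\<omega>\<in>{\<omega>. V \<omega> = v}. pmf p \<omega> * f v)"
    by (subst sum.image_gen[where g = V]) auto
  also have "\<dots> = (\<Sum>v\<in>range V. pmf (map_pmf V p) v * f v)"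
    by (simp add: pmf_map measure_measure_pmf_finite sum_distrib_right vimage_def)
  finally show ?thesis by simp
qed

lemma pmf_map_pmf_pos: "0 < pmf p \<omega> \<Longrightarrow> 0 < pmf (map_pmf V p) (V \<omega>)"
  by (simp add: pmf_positive_iff)

locale pmf_information_space =
  fixes b :: real and p :: "'w::finite pmf"
  assumes b_gt_1: "1 < b"
begin

sublocale information_space "measure_pmf p" b
  by unfold_locales (rule b_gt_1)

lemma simple_function_pmf [simp]: "simple_function (measure_pmf p) X"
  by (simp add: simple_function_def)

lemma simple_distributed_pmf: "simple_distributed (measure_pmf p) X (pmf (map_pmf X p))"
  by (rule measure_pmf.simple_distributedI) (auto simp: pmf_map)

lemma entropy_eq_sum:
  "ent b p X = - (\<Sum>\<omega>\<in>UNIV. pmf p \<omega> * log b (pmf (map_pmf X p) (X \<omega>)))"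
  using entropy_simple_distributed[OF simple_distributed_pmf, of X]
    sum_image_pmf_map[where f = "\<lambda>v. log b (pmf (map_pmf X p) v)" and V = X]
  by simp

lemma entropy_le_of_determines:
  assumes "determines Y X"
  shows "ent b p X \<le> ent b p Y"
proof -
  obtain f where "X = f \<circ> Y"
    using assms by (auto simp: determines_iff_factors)
  then show ?thesis
    by (simp only:) (rule entropy_data_processing, simp)
qed

lemma entropy_eq_of_determines:
  "determines Y X \<Longrightarrow> determines X Y \<Longrightarrow> ent b p X = ent b p Y"
  by (intro antisym entropy_le_of_determines)

lemma conditional_entropy_eq_diff: "cent b p X Y = ent b p (\<lambda>\<omega>. (Y \<omega>, X \<omega>)) - ent b p Y"
  using entropy_chain_rule[of Y X] by simp

lemma mutual_information_eq_entropies: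
  "minf b p X Y = ent b p X + ent b p Y - ent b p (\<lambda>\<omega>. (Y \<omega>, X \<omega>))"
  using mutual_information_eq_entropy_conditional_entropy[of X Y] conditional_entropy_eq_diff[of X Y]
  by simp

lemma entropy_submodular:
  "ent b p (\<lambda>\<omega>. (X \<omega>, Y \<omega>, Z \<omega>)) + ent b p Z \<le>
     ent b p (\<lambda>\<omega>. (X \<omega>, Z \<omega>)) + ent b p (\<lambda>\<omega>. (Y \<omega>, Z \<omega>))"
proof -
  let ?XYZ = "\<lambda>\<omega>. (X \<omega>, Y \<omega>, Z \<omega>)"
    and ?XZ = "\<lambda>\<omega>. (X \<omega>, Z \<omega>)" and ?YZ = "\<lambda>\<omega>. (Y \<omega>, Z \<omega>)"
  let ?l = "\<lambda>V \<omega>. pmf p \<omega> * log b (pmf (map_pmf V p) (V \<omega>))"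
  have "0 \<le> prob_space.conditional_mutual_information (measure_pmf p) b
      (count_space (X ` space (measure_pmf p))) (count_space (Y ` space (measure_pmf p)))
      (count_space (Z ` space (measure_pmf p))) X Y Z"
    by (rule conditional_mutual_information_nonneg) simp_all
  also have "\<dots> = (\<Sum>\<omega>\<in>UNIV. pmf p \<omega> * log b (pmf (map_pmf ?XYZ p) (?XYZ \<omega>) /
      (pmf (map_pmf ?XZ p) (?XZ \<omega>) * (pmf (map_pmf ?YZ p) (?YZ \<omega>) / pmf (map_pmf Z p) (Z \<omega>)))))"
    using sum_image_pmf_map[where V = ?XYZ and p = p and f = "\<lambda>(x, y, z).
      log b (pmf (map_pmf ?XYZ p) (x, y, z) /
        (pmf (map_pmf ?XZ p) (x, z) * (pmf (map_pmf ?YZ p) (y, z) / pmf (map_pmf Z p) z)))"]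
    by (subst conditional_mutual_information_eq[OF simple_distributed_pmf simple_distributed_pmf
        simple_distributed_pmf simple_distributed_pmf]) (simp add: split_beta')
  also have "\<dots> = (\<Sum>\<omega>\<in>UNIV. ?l ?XYZ \<omega> - ?l ?XZ \<omega> - ?l ?YZ \<omega> + ?l Z \<omega>)"
  proof (rule sum.cong[OF refl])
    fix \<omega>
    show "pmf p \<omega> * log b (pmf (map_pmf ?XYZ p) (?XYZ \<omega>) /
      (pmf (map_pmf ?XZ p) (?XZ \<omega>) * (pmf (map_pmf ?YZ p) (?YZ \<omega>) / pmf (map_pmf Z p) (Z \<omega>)))) =
      ?l ?XYZ \<omega> - ?l ?XZ \<omega> - ?l ?YZ \<omega> + ?l Z \<omega>"
    proof (cases "pmf p \<omega> = 0")
      case False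
      then have "0 < pmf p \<omega>" using pmf_nonneg[of p \<omega>] by linarith
      then show ?thesis
        using pmf_map_pmf_pos[of p \<omega> ?XYZ] pmf_map_pmf_pos[of p \<omega> ?XZ] pmf_map_pmf_pos[of p \<omega> ?YZ]
          pmf_map_pmf_pos[of p \<omega> Z]
        by (simp add: log_divide log_mult algebra_simps)
    qed simp
  qed
  also have "\<dots> = ent b p ?XZ + ent b p ?YZ - ent b p ?XYZ - ent b p Z"
    unfolding entropy_eq_sum by (simp add: sum.distrib sum_subtractf)
  finally show ?thesis by simp
qed

lemma conditional_entropy_antimono:
  assumes "determines Z2 Z1"
  shows "cent b p X Z2 \<le> cent b p X Z1"
proof -
  have "ent b p (\<lambda>\<omega>. (X \<omega>, Z2 \<omega>, Z1 \<omega>)) + ent b p Z1 \<le>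
      ent b p (\<lambda>\<omega>. (X \<omega>, Z1 \<omega>)) + ent b p (\<lambda>\<omega>. (Z2 \<omega>, Z1 \<omega>))"
    by (rule entropy_submodular)
  moreover have "ent b p (\<lambda>\<omega>. (X \<omega>, Z2 \<omega>, Z1 \<omega>)) = ent b p (\<lambda>\<omega>. (Z2 \<omega>, X \<omega>))"
    by (rule entropy_eq_of_determines) (use assms in \<open>unfold determines_def, blast\<close>)+
  moreover have "ent b p (\<lambda>\<omega>. (X \<omega>, Z1 \<omega>)) = ent b p (\<lambda>\<omega>. (Z1 \<omega>, X \<omega>))"
    by (rule entropy_eq_of_determines) (simp_all add: determines_def)
  moreover have "ent b p (\<lambda>\<omega>. (Z2 \<omega>, Z1 \<omega>)) = ent b p Z2"
    by (rule entropy_eq_of_determines) (use assms in \<open>unfold determines_def, blast\<close>)+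
  ultimately show ?thesis
    unfolding conditional_entropy_eq_diff by linarith
qed

lemma mutual_information_commute: "minf b p X Y = minf b p Y X"
proof -
  have "ent b p (\<lambda>\<omega>. (Y \<omega>, X \<omega>)) = ent b p (\<lambda>\<omega>. (X \<omega>, Y \<omega>))"
    by (rule entropy_eq_of_determines) (simp_all add: determines_def)
  then show ?thesis
    unfolding mutual_information_eq_entropies by simp
qed

lemma mutual_information_mono:
  assumes "determines X2 X1" and "determines Y2 Y1"
  shows "minf b p X1 Y1 \<le> minf b p X2 Y2"
proof -
  have mono_right: "minf b p V Y \<le> minf b p V Y'"
    if "determines Y' Y" for V :: "'w \<Rightarrow> 'v" and Y Y'
    using conditional_entropy_antimono[OF that, of V]
      mutual_information_eq_entropy_conditional_entropy[of V Y]
      mutual_information_eq_entropy_conditional_entropy[of V Y']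
    by simp
  have "minf b p X1 Y1 \<le> minf b p X1 Y2"
    using assms(2) by (rule mono_right)
  also have "\<dots> = minf b p Y2 X1"
    by (rule mutual_information_commute)
  also have "\<dots> \<le> minf b p Y2 X2"
    using assms(1) by (rule mono_right)
  also have "\<dots> = minf b p X2 Y2"
    by (rule mutual_information_commute)
  finally show ?thesis .
qed

lemma mutual_information_pair_eq:
  assumes "cent b p X Z = 0"
  shows "minf b p Y (\<lambda>\<omega>. (X \<omega>, Z \<omega>)) = minf b p Y Z"
proof -
  have "cent b p X (\<lambda>\<omega>. (Z \<omega>, Y \<omega>)) \<le> cent b p X Z"
    by (rule conditional_entropy_antimono) (auto simp: determines_def)
  then have "ent b p (\<lambda>\<omega>. ((Z \<omega>, Y \<omega>), X \<omega>)) \<le> ent b p (\<lambda>\<omega>. (Z \<omega>, Y \<omega>))"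
    using assms unfolding conditional_entropy_eq_diff by simp
  moreover have "ent b p (\<lambda>\<omega>. (Z \<omega>, Y \<omega>)) \<le> ent b p (\<lambda>\<omega>. ((X \<omega>, Z \<omega>), Y \<omega>))"
    by (rule entropy_le_of_determines) (auto simp: determines_def)
  moreover have "ent b p (\<lambda>\<omega>. ((Z \<omega>, Y \<omega>), X \<omega>)) = ent b p (\<lambda>\<omega>. ((X \<omega>, Z \<omega>), Y \<omega>))"
    by (rule entropy_eq_of_determines) (simp_all add: determines_def)
  moreover have "ent b p (\<lambda>\<omega>. (X \<omega>, Z \<omega>)) = ent b p (\<lambda>\<omega>. (Z \<omega>, X \<omega>))"
    by (rule entropy_eq_of_determines) (simp_all add: determines_def)
  moreover have "ent b p (\<lambda>\<omega>. (Z \<omega>, X \<omega>)) = ent b p Z"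
    using assms unfolding conditional_entropy_eq_diff by simp
  ultimately show ?thesis
    unfolding mutual_information_eq_entropies by linarith
qed

lemma conditional_entropy_le_add_mutual_information:
  "cent b p X Z \<le> cent b p X (\<lambda>\<omega>. (Y \<omega>, Z \<omega>)) + minf b p Y (\<lambda>\<omega>. (X \<omega>, Z \<omega>))"
proof -
  have "ent b p (\<lambda>\<omega>. (Z \<omega>, Y \<omega>)) \<le> ent b p Z + ent b p Y"
    using entropy_chain_rule[of Z Y] conditional_entropy_less_eq_entropy[of Y Z] by simp
  moreover have "ent b p (\<lambda>\<omega>. (Y \<omega>, Z \<omega>)) = ent b p (\<lambda>\<omega>. (Z \<omega>, Y \<omega>))"
    by (rule entropy_eq_of_determines) (simp_all add: determines_def)
  moreover have "ent b p (\<lambda>\<omega>. (X \<omega>, Z \<omega>)) = ent b p (\<lambda>\<omega>. (Z \<omega>, X \<omega>))"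
    by (rule entropy_eq_of_determines) (simp_all add: determines_def)
  moreover have "ent b p (\<lambda>\<omega>. ((Y \<omega>, Z \<omega>), X \<omega>)) = ent b p (\<lambda>\<omega>. ((X \<omega>, Z \<omega>), Y \<omega>))"
    by (rule entropy_eq_of_determines) (simp_all add: determines_def)
  ultimately show ?thesis
    unfolding conditional_entropy_eq_diff mutual_information_eq_entropies by linarith
qed

end

lemma determines_Wbar:
  assumes "k \<in> {1..K}" and "k \<noteq> k'"
  shows "determines (Wbar K W k') (W k)"
  unfolding determines_def Wbar_def using assms by (metis Diff_iff restrict_apply singletonD)

lemma determines_allDB:
  assumes "n \<in> {1..N}"
  shows "determines (allDB N X k U) (X k U n)"
  unfolding determines_def allDB_def using assms by (metis restrict_apply)

lemma one_less_card_field: "1 < real CARD('f::{finite,field})"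
proof -
  have "card {0::'f, 1} \<le> CARD('f)"
    by (rule card_mono) auto
  then show ?thesis by simp
qed

theorem lemma8:
  fixes p :: "'w::finite pmf"
    and W :: "nat \<Rightarrow> 'w \<Rightarrow> 'f::{finite,field} list"
    and Rs :: "'c \<Rightarrow> 'w \<Rightarrow> 'r" and F :: "'w \<Rightarrow> 'g"
    and Q :: "nat \<Rightarrow> 'c set \<Rightarrow> nat \<Rightarrow> 'w \<Rightarrow> 'q"
    and A :: "nat \<Rightarrow> 'c set \<Rightarrow> nat \<Rightarrow> 'w \<Rightarrow> 'a"
  assumes valid: "valid_scheme p N K L C m W Rs F Q A"
    and n: "n \<in> {1..N}" and k: "k \<in> {1..K}" and k': "k' \<in> {1..K}" and kk': "k \<noteq> k'"
    and U: "admissible C m U"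
    and U': "admissible C m U'"
    and HU': "ent (real CARD('f)) p (comps U' Rs) = ent (real CARD('f)) p (comps U Rs)"
    and priv: "map_pmf (\<lambda>\<omega>. (Q k U n \<omega>, A k U n \<omega>, Wall K W \<omega>, comps C Rs \<omega>)) p =
               map_pmf (\<lambda>\<omega>. (Q k' U' n \<omega>, A k' U' n \<omega>, Wall K W \<omega>, comps C Rs \<omega>)) p"
  shows "cent (real CARD('f)) p (A k' U' n) (\<lambda>\<omega>. (Q k' U' n \<omega>, comps U' Rs \<omega>)) =
         cent (real CARD('f)) p (A k' U' n) (\<lambda>\<omega>. (Q k' U' n \<omega>, W k \<omega>, comps U' Rs \<omega>))"
proof -
  let ?b = "real CARD('f)"
  interpret pmf_information_space ?b p
    by unfold_locales (rule one_less_card_field)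
  let ?Qs = "allDB N Q k' U'" and ?Z = "\<lambda>\<omega>. (F \<omega>, allDB N A k' U' \<omega>, comps U' Rs \<omega>)"
  let ?Wrest = "Wbar K W k'" and ?QU = "\<lambda>\<omega>. (Q k' U' n \<omega>, comps U' Rs \<omega>)"
  have query_det: "cent ?b p ?Qs F = 0" and secrecy: "minf ?b p ?Wrest ?Z = 0"
    using valid k' U' unfolding valid_scheme_def Let_def by blast+
  have "cent ?b p ?Qs ?Z \<le> cent ?b p ?Qs F"
    by (rule conditional_entropy_antimono) (simp add: determines_def)
  then have "cent ?b p ?Qs ?Z = 0"
    using query_det conditional_entropy_nonneg[of ?Qs ?Z] by simp
  then have secrecy_queries: "minf ?b p ?Wrest (\<lambda>\<omega>. (?Qs \<omega>, ?Z \<omega>)) = 0"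
    using secrecy mutual_information_pair_eq[of ?Qs ?Z ?Wrest] by simp
  have "determines ?Wrest (W k)"
    using k kk' by (rule determines_Wbar)
  moreover have "determines (\<lambda>\<omega>. (?Qs \<omega>, ?Z \<omega>)) (\<lambda>\<omega>. (A k' U' n \<omega>, ?QU \<omega>))"
    using determines_allDB[OF n, of Q k' U'] determines_allDB[OF n, of A k' U']
    unfolding determines_def by blast
  ultimately have "minf ?b p (W k) (\<lambda>\<omega>. (A k' U' n \<omega>, ?QU \<omega>)) \<le> 0"
    by (subst secrecy_queries[symmetric]) (rule mutual_information_mono)
  then have leak: "minf ?b p (W k) (\<lambda>\<omega>. (A k' U' n \<omega>, ?QU \<omega>)) = 0"
    using mutual_information_nonneg_simple[of "W k" "\<lambda>\<omega>. (A k' U' n \<omega>, ?QU \<omega>)"] by simp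
  have "cent ?b p (A k' U' n) ?QU \<le> cent ?b p (A k' U' n) (\<lambda>\<omega>. (W k \<omega>, ?QU \<omega>))"
    using conditional_entropy_le_add_mutual_information[of "A k' U' n" ?QU "W k"] leak by simp
  also have "\<dots> \<le> cent ?b p (A k' U' n) (\<lambda>\<omega>. (Q k' U' n \<omega>, W k \<omega>, comps U' Rs \<omega>))"
    by (rule conditional_entropy_antimono) (simp add: determines_def)
  finally show ?thesis
    using conditional_entropy_antimono[of "\<lambda>\<omega>. (Q k' U' n \<omega>, W k \<omega>, comps U' Rs \<omega>)" ?QU "A k' U' n"]
    by (simp add: determines_def)
qed

end
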